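(* Let $0\le d\le\rho(m)-1$ and let $n\ge h$ be an integer such that $n\not\equiv h-\rho(m)+L_1(d)+j\pmod{L_2}$ for every $j\in\{0,1,\dots,d\}$. Then \[ \sum_{f\in A(d)} y(n-f)\;<\;Tot(d). \]
   Context: For $u\in\mathbb{R}$ let $\mathbf 1[u]=1$ if $u\ge 0$ and $\mathbf 1[u]=0$ if $u<0$. Let $m$ be a positive integer and let $\rho(m)$ denote the number of primes $p$ with $2m<p<3m$; assume $\rho(m)\ge 2$. List these primes as $p_0>p_1>\dots>p_{\rho(m)-1}$ and put $\alpha_i=3m-p_i$. Let $k=(6m-1)\rho(m)$, $\mu_i=\lfloor k/p_i\rfloor$, $\beta_i=k-p_i\mu_i$. Define weights $\bar a_j$, $1\le j\le k$: if $\rho(m)$ is even, $\bar a_j=2$ if $j=\ell p_i$ for some $i$ and some $\ell$ with $1\le \ell\le 3\rho(m)/2$, $\bar a_j=-2$ if $j=\ell p_i$ with $3\rho(m)/2<\ell\le 2\rho(m)$, and $\bar a_j=0$ otherwise; if $\rho(m)$ is odd, $\bar a_j=2$ if $j=\ell p_i$ with $1\le\ell\le (3\rho(m)-1)/2$, $\bar a_j=-2$ if $j=\ell p_i$ with $(3\rho(m)+1)/2\le \ell\le 2\rho(m)-2$, $\bar a_j=-1$ if $j=\ell p_i$ with $\ell\in\{2\rho(m)-1,2\rho(m)\}$, and $\bar a_j=0$ otherwise (well defined since the sets $\{\ell p_i:1\le\ell\le2\rho(m)\}$ are pairwise disjoint). Let $\bar\theta=2\rho(m)$. For each $i$ define $x^{\alpha_i}(t)$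 for $0\le t\le k-1$ by $x^{\alpha_i}(t)=1$ if $t=\beta_i+\ell p_i$ for some $0\le \ell\le\mu_i-1$ and $x^{\alpha_i}(t)=0$ otherwise, and for $t\ge k$ by $x^{\alpha_i}(t)=\mathbf 1\big[\sum_{j=1}^k \bar a_j x^{\alpha_i}(t-j)-\bar\theta\big]$. Let $h=\rho(m)k$. For $1\le f\le h$ let $b_f=\bar a_j$ if $f=\rho(m)j$ with $1\le j\le k$, and $b_f=0$ otherwise. Define $(y(n))_{n\ge0}$ by $y(\rho(m)j+i)=x^{\alpha_i}(1+j)$ for $0\le j\le k-1$, $0\le i\le\rho(m)-1$, and $y(n)=\mathbf 1\big[\sum_{f=1}^h b_f y(n-f)-\bar\theta\big]$ for $n\ge h$. Let $L_1(d)=\rho(m)\cdot\mathrm{lcm}(p_0,\dots,p_d)$ for $0\le d\le\rho(m)-1$ and $L_2=\rho(m)\cdot\mathrm{lcm}(p_0,\dots,p_{\rho(m)-1})$. For $0\le d\le\rho(m)-1$ let $B_0(d)=\{f\in\mathbb Z:\ 1\le f\le h-d,\ y(h+L_1(d)-\rho(m)-f)=1\}$, $B_{\ell+1}(d)=\{1+f: f\in B_\ell(d)\}$ for $\ell\ge0$, $A(d)=\bigcup_{\ell=0}^{d}B_\ell(d)$, and $Tot(d)=|B_0(d)|$. *)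

theory Defs
  imports Main "HOL-Computational_Algebra.Primes" "HOL-Number_Theory.Cong"
begin

definition ind :: "int \<Rightarrow> int" where
  "ind u = (if u \<ge> 0 then 1 else 0)"

definition primeset :: "nat \<Rightarrow> nat set" where
  "primeset m = {p. prime p \<and> 2*m < p \<and> p < 3*m}"

definition rho :: "nat \<Rightarrow> nat" where
  "rho m = card (primeset m)"

definition pr :: "nat \<Rightarrow> nat \<Rightarrow> nat" where
  "pr m i = rev (sorted_list_of_set (primeset m)) ! i"

definition alpha :: "nat \<Rightarrow> nat \<Rightarrow> nat" where
  "alpha m i = 3*m - pr m i"

definition kk :: "nat \<Rightarrow> nat" where
  "kk m = (6*m - 1) * rho m"

definition mu :: "nat \<Rightarrow> nat \<Rightarrow> nat" where
  "mu m i = kk m div pr m i"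

definition beta :: "nat \<Rightarrow> nat \<Rightarrow> nat" where
  "beta m i = kk m - pr m i * mu m i"

definition wt :: "nat \<Rightarrow> nat \<Rightarrow> int" where
  "wt m l = (if even (rho m) then
               (if 1 \<le> l \<and> 2 * l \<le> 3 * rho m then 2
                else if 3 * rho m < 2 * l \<and> l \<le> 2 * rho m then -2 else 0)
             else
               (if 1 \<le> l \<and> 2 * l \<le> 3 * rho m - 1 then 2
                else if 3 * rho m + 1 \<le> 2 * l \<and> l \<le> 2 * rho m - 2 then -2
                else if l = 2 * rho m - 1 \<or> l = 2 * rho m then -1 else 0))"

definition abar :: "nat \<Rightarrow> nat \<Rightarrow> int" where
  "abar m j = (if \<exists>i l. i < rho m \<and> 1 \<le> l \<and> l \<le> 2 * rho m \<and> j = l * pr m i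
               then wt m (SOME l. \<exists>i. i < rho m \<and> 1 \<le> l \<and> l \<le> 2 * rho m \<and> j = l * pr m i)
               else 0)"

definition thetabar :: "nat \<Rightarrow> int" where
  "thetabar m = 2 * int (rho m)"

text \<open>The sequence x^{alpha_i}(t), indexed here by i (alpha_i is determined by i).\<close>
function xs :: "nat \<Rightarrow> nat \<Rightarrow> nat \<Rightarrow> int" where
  "xs m i t = (if t < kk m then
                 (if \<exists>l. l < mu m i \<and> t = beta m i + l * pr m i then 1 else 0)
               else ind ((\<Sum>j = 1..kk m. abar m j * xs m i (t - j)) - thetabar m))"
  by pat_completeness auto
termination
  by (relation "measure (\<lambda>(m, i, t). t)") auto

definition hh :: "nat \<Rightarrow> nat" where
  "hh m = rho m * kk m"

definition bb :: "nat \<Rightarrow> nat \<Rightarrow> int" where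
  "bb m f = (if rho m dvd f \<and> 1 \<le> f div rho m \<and> f div rho m \<le> kk m
             then abar m (f div rho m) else 0)"

function ys :: "nat \<Rightarrow> nat \<Rightarrow> int" where
  "ys m n = (if n < hh m then xs m (n mod rho m) (1 + n div rho m)
             else ind ((\<Sum>f = 1..hh m. bb m f * ys m (n - f)) - thetabar m))"
  by pat_completeness auto
termination
  by (relation "measure (\<lambda>(m, n). n)") auto

definition L1 :: "nat \<Rightarrow> nat \<Rightarrow> nat" where
  "L1 m d = rho m * Lcm (pr m ` {..d})"

definition L2 :: "nat \<Rightarrow> nat" where
  "L2 m = rho m * Lcm (pr m ` {..<rho m})"

definition B0 :: "nat \<Rightarrow> nat \<Rightarrow> nat set" where
  "B0 m d = {f. 1 \<le> f \<and> f \<le> hh m - d \<and> ys m (hh m + L1 m d - rho m - f) = 1}"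

definition Bl :: "nat \<Rightarrow> nat \<Rightarrow> nat \<Rightarrow> nat set" where
  "Bl m d l = (\<lambda>f. l + f) ` B0 m d"

definition AA :: "nat \<Rightarrow> nat \<Rightarrow> nat set" where
  "AA m d = (\<Union>l\<in>{0..d}. Bl m d l)"

definition Tot :: "nat \<Rightarrow> nat \<Rightarrow> nat" where
  "Tot m d = card (B0 m d)"

end

theory Submission
  imports Defs
begin

(* Write r = rho m, k = kk m and p_i for the primes in (2m, 3m), decreasing.
   (1) Arithmetic of the primes: r <= (m+1)/2, so 2r < p_i, 2 r p_i < k and
       k < p_i p_j.  Hence the multiples l p_i (1 <= l <= 2r) of different
       primes are all distinct and the tap weights satisfy abar (l p_i) = wt l.
   (2) Closed forms.  x^{alpha_i}(t) = 1 iff t = k (mod p_i): on that residue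
       class the taps l p_i all see a 1 and their weights sum to exactly
       theta = 2r, while off the class each other prime contributes at most
       one tap, giving at most 2(r-1) < theta.  The interleaved sequence
       satisfies y(n) = x^{alpha_(n mod r)}(1 + n div r), so y(t) = 1 iff
       r p_(t mod r) divides t - (r(k-1) + t mod r).
   (3) Counting.  Sort the f in A(d) with y(n-f) = 1, and the f in B_0(d),
       by the residue class i of the argument mod r.  Within a class the
       elements are congruent mod r p_i, so A(d) has at most (k-1) div p_i + 1
       of them, while B_0(d) has at least (k-1) div p_i >= 2r.  The
       congruence hypothesis yields a class in which n is not aligned with
       any shift l <= d of the reference point h + L_1(d) - r; there A(d)
       has at most d + 1 <= r hits.  Summing over the classes gives the
       strict inequality. *)

declare xs.simps[simp del] ys.simps[simp del]

text \<open>A set of positive integers up to L that are pairwise congruent modulo q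
  has at most one element in each block of q consecutive integers.\<close>
lemma card_pairwise_cong_le:
  fixes S :: "nat set" and q L :: nat
  assumes S: "S \<subseteq> {1..L}" and q: "q > 0"
    and c: "\<And>x y. x \<in> S \<Longrightarrow> y \<in> S \<Longrightarrow> int q dvd int x - int y"
  shows "card S \<le> (L - 1) div q + 1"
proof -
  have inj: "inj_on (\<lambda>x. (x - 1) div q) S"
  proof (rule inj_onI)
    fix x y assume xS: "x \<in> S" and yS: "y \<in> S" and e: "(x - 1) div q = (y - 1) div q"
    have x1: "x \<ge> 1" and y1: "y \<ge> 1" using xS yS S by auto
    have "int q dvd int (x - 1) - int (y - 1)" using c[OF xS yS] x1 y1 by (simp add: of_nat_diff)
    hence "int (x - 1) mod int q = int (y - 1) mod int q" by (simp add: mod_eq_dvd_iff)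
    hence "(x - 1) mod q = (y - 1) mod q" by (metis of_nat_eq_iff zmod_int)
    hence "x - 1 = y - 1" using e by (metis div_mult_mod_eq)
    thus "x = y" using x1 y1 by simp
  qed
  have "(\<lambda>x. (x - 1) div q) ` S \<subseteq> {0..(L - 1) div q}"
    using S by (force intro!: div_le_mono diff_le_mono)
  hence "card S \<le> card {0..(L - 1) div q}"
    using card_inj_on_le[OF inj] by blast
  thus ?thesis by simp
qed

lemma card_class_ge:
  fixes q a L :: nat and e :: int
  assumes q: "q > 0"
  shows "L div q \<le> card {x \<in> {a..<a+L}. int q dvd int x - e}"
proof -
  define s where "s = nat ((e - int a) mod int q)"
  have s_lt: "s < q" using q unfolding s_def by (simp add: nat_less_iff)
  have s_int: "int s = (e - int a) mod int q" unfolding s_def using q by simp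
  define g where "g j = a + j * q + s" for j
  have inj: "inj_on g {..<L div q}" unfolding g_def inj_on_def using q by auto
  have "g ` {..<L div q} \<subseteq> {x \<in> {a..<a+L}. int q dvd int x - e}"
  proof
    fix x assume "x \<in> g ` {..<L div q}"
    then obtain j where j: "j < L div q" and x: "x = g j" by auto
    have "Suc j * q \<le> (L div q) * q" using j by (intro mult_le_mono1) simp
    also have "\<dots> \<le> L" by simp
    finally have "j * q + q \<le> L" by simp
    hence "x < a + L" using s_lt unfolding x g_def by simp
    moreover have "int x - e = int q * (int j - (e - int a) div int q)"
    proof -
      have "int x - e = int a + int j * int q + (e - int a) mod int q - e"
        unfolding x g_def using s_int by simp
      also have "\<dots> = int j * int q - int q * ((e - int a) div int q)"
        using div_mult_mod_eq[of "e - int a" "int q"] by (simp add: algebra_simps)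
      finally show ?thesis by (simp add: algebra_simps)
    qed
    ultimately show "x \<in> {x \<in> {a..<a+L}. int q dvd int x - e}"
      unfolding x g_def by auto
  qed
  hence "card {..<L div q} \<le> card {x \<in> {a..<a+L}. int q dvd int x - e}"
    using card_inj_on_le[OF inj] by auto
  thus ?thesis by simp
qed

lemma small_dvd_eq:
  fixes r a b :: nat
  assumes "int r dvd int a - int b" "a < r" "b < r" shows "a = b"
proof -
  have "int a mod int r = int b mod int r" using assms(1) by (simp add: mod_eq_dvd_iff)
  hence "a mod r = b mod r" by (metis of_nat_eq_iff zmod_int)
  thus ?thesis using assms by simp
qed

lemma div_cancel_left_pred:
  fixes r k p :: nat assumes "r > 0" "k > 0"
  shows "(r * k - 1) div (r * p) = (k - 1) div p"
proof -
  have "r * k - 1 = (r - 1) + r * (k - 1)" using assms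
    by (cases k) (auto simp: algebra_simps)
  hence "(r * k - 1) div r = (k - 1) + (r - 1) div r"
    using assms div_mult_self2[of r "r - 1" "k - 1"] by simp
  hence "(r * k - 1) div r = k - 1" using assms by simp
  thus ?thesis by (simp add: div_mult2_eq)
qed

lemma sum_three_steps:
  fixes x y z :: int and a b c :: nat
  shows "(\<Sum>l=1..a+b+c. if l \<le> a then x else if l \<le> a+b then y else z)
         = int a * x + int b * y + int c * z"
proof -
  let ?g = "\<lambda>l. if l \<le> a then x else if l \<le> a+b then y else z"
  have U: "{1..a+b+c} = ({1..a} \<union> {a<..a+b}) \<union> {a+b<..a+b+c}" by auto
  have "sum ?g {1..a+b+c} = sum ?g ({1..a} \<union> {a<..a+b}) + sum ?g {a+b<..a+b+c}"
    unfolding U by (rule sum.union_disjoint) auto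
  also have "sum ?g ({1..a} \<union> {a<..a+b}) = sum ?g {1..a} + sum ?g {a<..a+b}"
    by (rule sum.union_disjoint) auto
  also have "sum ?g {1..a} = sum (\<lambda>_. x) {1..a}" by (rule sum.cong) auto
  also have "sum ?g {a<..a+b} = sum (\<lambda>_. y) {a<..a+b}" by (rule sum.cong) auto
  also have "sum ?g {a+b<..a+b+c} = sum (\<lambda>_. z) {a+b<..a+b+c}" by (rule sum.cong) auto
  finally show ?thesis by simp
qed

lemma sum_less_by_slack:
  fixes a b :: "'i \<Rightarrow> nat"
  assumes fin: "finite I" and i0: "i0 \<in> I"
    and le: "\<And>i. i \<in> I \<Longrightarrow> a i \<le> b i + 1" and slack: "a i0 + card I \<le> b i0"
  shows "sum a I < sum b I"
proof -
  have "sum a (I - {i0}) \<le> sum (\<lambda>i. b i + 1) (I - {i0})" by (rule sum_mono) (use le in auto)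
  also have "\<dots> = sum b (I - {i0}) + card (I - {i0})" unfolding sum.distrib by simp
  also have "card (I - {i0}) = card I - 1" using fin i0 by simp
  finally have rest: "sum a (I - {i0}) \<le> sum b (I - {i0}) + (card I - 1)" .
  have "card I > 0" using fin i0 card_gt_0_iff by blast
  hence "a i0 + sum a (I - {i0}) < b i0 + sum b (I - {i0})" using rest slack by linarith
  thus ?thesis using fin i0 by (simp add: sum.remove)
qed

section \<open>The primes between 2m and 3m\<close>

locale prime_window =
  fixes m :: nat
  assumes m_pos: "m > 0" and rho_ge_2: "rho m \<ge> 2"
begin

abbreviation "r \<equiv> rho m"
abbreviation "k \<equiv> kk m"
abbreviation "p \<equiv> pr m"

lemma primeset_finite: "finite (primeset m)"
  unfolding primeset_def by (rule finite_subset[of _ "{..<3*m}"]) auto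

text \<open>The primes in (2m, 3m) are odd, so halving them is injective into [m, 3m/2].\<close>
lemma rho_le: "2 * r \<le> m + 1"
proof -
  have inj: "inj_on (\<lambda>x. x div 2) (primeset m)"
  proof (rule inj_onI)
    fix x y assume x: "x \<in> primeset m" and y: "y \<in> primeset m" and e: "x div 2 = y div 2"
    have "x > 2" "y > 2" using x y m_pos unfolding primeset_def by auto
    hence "odd x" "odd y" using x y prime_odd_nat unfolding primeset_def by auto
    thus "x = y" using e by (metis odd_two_times_div_two_succ)
  qed
  have "(\<lambda>x. x div 2) ` primeset m \<subseteq> {m..(3*m - 1) div 2}"
    unfolding primeset_def by (auto intro!: div_le_mono)
  hence "card (primeset m) \<le> card {m..(3*m - 1) div 2}"
    using card_inj_on_le[OF inj] by blast
  hence a: "r \<le> (3*m - 1) div 2 + 1 - m" unfolding rho_def by simp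
  have "2 * ((3*m - 1) div 2) \<le> 3*m - 1" by simp
  thus ?thesis using a m_pos by linarith
qed

lemma pr_in: "i < r \<Longrightarrow> p i \<in> primeset m"
proof -
  assume "i < r"
  hence "i < length (rev (sorted_list_of_set (primeset m)))"
    using primeset_finite by (simp add: rho_def length_sorted_list_of_set)
  hence "p i \<in> set (rev (sorted_list_of_set (primeset m)))"
    unfolding pr_def by (rule nth_mem)
  thus ?thesis using primeset_finite by (simp add: set_sorted_list_of_set)
qed

lemma pr_inj: "i < r \<Longrightarrow> j < r \<Longrightarrow> p i = p j \<Longrightarrow> i = j"
proof -
  assume i: "i < r" and j: "j < r" and e: "p i = p j"
  have d: "distinct (rev (sorted_list_of_set (primeset m)))"
    by (simp add: distinct_sorted_list_of_set)
  have l: "length (rev (sorted_list_of_set (primeset m))) = r"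
    using primeset_finite by (simp add: rho_def length_sorted_list_of_set)
  show "i = j" using nth_eq_iff_index_eq[OF d] i j e l unfolding pr_def by auto
qed

lemma pr_prime: "i < r \<Longrightarrow> prime (p i)"
  using pr_in unfolding primeset_def by auto
lemma pr_gt: "i < r \<Longrightarrow> 2 * m < p i"
  using pr_in unfolding primeset_def by auto
lemma pr_lt: "i < r \<Longrightarrow> p i < 3 * m"
  using pr_in unfolding primeset_def by auto

lemma two_rho_lt_pr: "i < r \<Longrightarrow> 2 * r < p i"
  using pr_gt[of i] rho_le m_pos by linarith

lemma pr_pos: "i < r \<Longrightarrow> p i > 0"
  using pr_gt[of i] by linarith

lemma rho_pos: "r > 0" using rho_ge_2 by linarith

lemma kk_pos: "k > 0" using m_pos rho_pos by (simp add: kk_def)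

lemma hh_eq: "hh m = r * k" unfolding hh_def by simp

text \<open>All 2r taps belonging to one prime lie strictly inside the window {1..k}.\<close>
lemma taps_below_kk: "i < r \<Longrightarrow> 2 * r * p i \<le> k - 1"
proof -
  assume i: "i < r"
  have "p i \<le> 3*m - 1" using pr_lt[OF i] by linarith
  hence "2 * r * p i \<le> 2 * r * (3*m - 1)" by simp
  also have "\<dots> \<le> k - 1" using rho_pos m_pos unfolding kk_def
    by (simp add: algebra_simps diff_mult_distrib2)
  finally show ?thesis .
qed

lemma kk_lt_pr_product: "i < r \<Longrightarrow> j < r \<Longrightarrow> k < p i * p j"
proof -
  assume i: "i < r" and j: "j < r"
  have a: "2*m+1 \<le> p i" "2*m+1 \<le> p j" using pr_gt[OF i] pr_gt[OF j] by auto
  have "(2*m+1)*(2*m+1) \<le> p i * p j" using a by (intro mult_le_mono)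
  moreover have "2 * k \<le> (6*m - 1) * (m+1)" using rho_le unfolding kk_def
    by (metis mult.left_commute mult_le_mono2)
  moreover have "(6*m - 1) * (m+1) < 2 * ((2*m+1)*(2*m+1))" using m_pos
    by (simp add: algebra_simps diff_mult_distrib diff_mult_distrib2)
  ultimately show ?thesis by linarith
qed

lemma pr_dvd_other: "i < r \<Longrightarrow> i' < r \<Longrightarrow> i \<noteq> i' \<Longrightarrow> p i dvd x * p i' \<Longrightarrow> p i dvd x"
proof -
  assume i: "i < r" and i': "i' < r" and ne: "i \<noteq> i'" and d: "p i dvd x * p i'"
  have "\<not> p i dvd p i'"
  proof
    assume "p i dvd p i'"
    hence "p i = p i'" using primes_dvd_imp_eq pr_prime[OF i] pr_prime[OF i'] by blast
    thus False using pr_inj[OF i i'] ne by blast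
  qed
  thus ?thesis using d prime_dvd_multD[OF pr_prime[OF i]] by blast
qed

lemma pr_ndvd_small: "i < r \<Longrightarrow> 0 < x \<Longrightarrow> x \<le> 2 * r \<Longrightarrow> \<not> p i dvd x"
  using two_rho_lt_pr[of i] by (auto dest: dvd_imp_le)

text \<open>A common multiple of r p_i and r p_i' (i distinct from i') smaller than r k in
  absolute value is 0, because k < p_i p_i'.\<close>
lemma common_multiple_small:
  assumes i: "i < r" and i': "i' < r" and ne: "i \<noteq> i'"
    and d1: "int (r * p i) dvd X" and d2: "int (r * p i') dvd X"
    and small: "\<bar>X\<bar> < int (r * k)"
  shows "X = 0"
proof -
  define Z where "Z = nat \<bar>X\<bar>"
  have z1: "r * p i dvd Z" and z2: "r * p i' dvd Z" using d1 d2 unfolding Z_def by simp_all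
  obtain x where x: "Z = r * p i * x" using z1 by (auto elim: dvdE)
  have "r * p i' dvd r * (p i * x)" using z2 x by (simp add: mult.assoc)
  hence "p i' dvd x * p i" using rho_pos by (simp add: mult.commute)
  hence "p i' dvd x" using pr_dvd_other[OF i' i] ne by blast
  then obtain y where y: "x = p i' * y" by (auto elim: dvdE)
  have Zeq: "Z = r * (p i * p i') * y" using x y by (simp add: mult.assoc)
  have Zlt: "Z < r * k" using small unfolding Z_def by linarith
  have "y = 0"
  proof (rule ccontr)
    assume "y \<noteq> 0"
    hence "r * (p i * p i') \<le> Z" using Zeq by simp
    moreover have "r * k < r * (p i * p i')" using kk_lt_pr_product[OF i i'] rho_pos by simp
    ultimately show False using Zlt by linarith
  qed
  thus ?thesis using Zeq unfolding Z_def by simp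
qed

section \<open>The tap weights\<close>

definition tap :: "nat \<Rightarrow> bool" where
  "tap j = (\<exists>i l. i < r \<and> 1 \<le> l \<and> l \<le> 2 * r \<and> j = l * p i)"

text \<open>The representation of a tap is unique, so its weight is wt of the multiplier.\<close>
lemma abar_tap: assumes i: "i < r" and l1: "1 \<le> l" and l2: "l \<le> 2 * r"
  shows "abar m (l * p i) = wt m l"
proof -
  have ex: "\<exists>i' l'. i' < r \<and> 1 \<le> l' \<and> l' \<le> 2 * r \<and> l * p i = l' * p i'"
    using i l1 l2 by blast
  have "(SOME l'. \<exists>i'. i' < r \<and> 1 \<le> l' \<and> l' \<le> 2 * r \<and> l * p i = l' * p i') = l"
  proof (rule some_equality)
    show "\<exists>i'. i' < r \<and> 1 \<le> l \<and> l \<le> 2 * r \<and> l * p i = l * p i'" using i l1 l2 by blast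
  next
    fix x assume "\<exists>i'. i' < r \<and> 1 \<le> x \<and> x \<le> 2 * r \<and> l * p i = x * p i'"
    then obtain i' where i': "i' < r" and x1: "1 \<le> x" and x2: "x \<le> 2 * r"
      and e: "l * p i = x * p i'" by blast
    show "x = l"
    proof (cases "i' = i")
      case True thus ?thesis using e pr_pos[OF i] by simp
    next
      case False
      have "p i dvd x * p i'" using e by (metis dvd_triv_right)
      hence "p i dvd x" using pr_dvd_other[OF i i'] False by blast
      thus ?thesis using pr_ndvd_small[OF i] x1 x2 by simp
    qed
  qed
  thus ?thesis using ex unfolding abar_def by simp
qed

lemma abar_non_tap: "\<not> tap j \<Longrightarrow> abar m j = 0"
  unfolding abar_def tap_def by auto

lemma abar_le_2: "abar m j \<le> 2"
  unfolding abar_def wt_def by auto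

lemma wt_sum: "(\<Sum>l=1..2*r. wt m l) = 2 * int r"
proof (cases "even r")
  case True
  then obtain s where s: "r = 2 * s" by blast
  have "(\<Sum>l=1..2*r. wt m l)
      = (\<Sum>l=1..3*s+s+0. if l \<le> 3*s then 2 else if l \<le> 3*s+s then -2 else 0)"
    using s True by (intro sum.cong) (auto simp: wt_def)
  also have "\<dots> = 2 * int r" using s by (subst sum_three_steps) simp
  finally show ?thesis .
next
  case False
  then obtain s where s: "r = 2 * s + 1" using oddE by blast
  have s1: "s \<ge> 1" using s rho_ge_2 by simp
  have "(\<Sum>l=1..2*r. wt m l) = (\<Sum>l=1..(3*s+1)+(s-1)+2.
      if l \<le> 3*s+1 then 2 else if l \<le> (3*s+1)+(s-1) then -2 else -1)"
    using s False s1 by (intro sum.cong) (auto simp: wt_def)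
  also have "\<dots> = 2 * int r" using s s1 by (subst sum_three_steps) (simp add: of_nat_diff)
  finally show ?thesis .
qed

lemma abar_sum_multiples:
  assumes i: "i < r"
  shows "(\<Sum>j = 1..k. if p i dvd j then abar m j else 0) = 2 * int r"
proof -
  let ?P = "p i" and ?g = "\<lambda>j. if p i dvd j then abar m j else 0"
  let ?M = "(\<lambda>l. l * ?P) ` {1..2*r}"
  have sub: "?M \<subseteq> {1..k}"
  proof
    fix x assume "x \<in> ?M"
    then obtain l where l: "l \<in> {1..2*r}" "x = l * ?P" by auto
    have "l * ?P \<le> 2 * r * ?P" using l by simp
    also have "\<dots> \<le> k - 1" using taps_below_kk[OF i] .
    finally show "x \<in> {1..k}" using l pr_pos[OF i] by auto
  qed
  have zero: "\<forall>j\<in>{1..k} - ?M. ?g j = 0"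
  proof
    fix j assume j: "j \<in> {1..k} - ?M"
    show "?g j = 0"
    proof (cases "?P dvd j \<and> tap j")
      case True
      then obtain i' l where il: "i' < r" "1 \<le> l" "l \<le> 2*r" "j = l * p i'"
        unfolding tap_def by blast
      have "i' = i"
      proof (rule ccontr)
        assume ne: "i' \<noteq> i"
        have "?P dvd l * p i'" using True il(4) by simp
        hence "?P dvd l" using pr_dvd_other[OF i il(1)] ne by metis
        thus False using pr_ndvd_small[OF i, of l] il(2,3) by simp
      qed
      hence "j \<in> ?M" using il by auto
      thus ?thesis using j by blast
    next
      case False thus ?thesis using abar_non_tap by auto
    qed
  qed
  have "(\<Sum>j = 1..k. ?g j) = (\<Sum>j \<in> ?M. ?g j)"
    using sum.mono_neutral_left[OF _ sub zero] by simp
  also have "\<dots> = (\<Sum>l \<in> {1..2*r}. ?g (l * ?P))"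
    using pr_pos[OF i] by (subst sum.reindex) (auto simp: inj_on_def)
  also have "\<dots> = (\<Sum>l \<in> {1..2*r}. wt m l)"
    by (rule sum.cong) (use abar_tap[OF i] in auto)
  finally show ?thesis using wt_sum by simp
qed

lemma taps_distinct_mod:
  assumes i: "i < r" and i': "i' < r" and ne: "i \<noteq> i'"
    and l1: "1 \<le> l1" "l1 \<le> 2 * r" and l2: "1 \<le> l2" "l2 \<le> 2 * r"
    and t1: "l1 * p i' \<le> t" and t2: "l2 * p i' \<le> t"
    and e: "(t - l1 * p i') mod p i = (t - l2 * p i') mod p i"
  shows "l1 = l2"
proof -
  have key: "a = b" if ab: "b \<le> a" and a1: "1 \<le> a" "a \<le> 2 * r" and b1: "1 \<le> b" "b \<le> 2 * r"
    and ta: "a * p i' \<le> t" and tb: "b * p i' \<le> t"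
    and ee: "(t - a * p i') mod p i = (t - b * p i') mod p i" for a b
  proof -
    have le: "t - a * p i' \<le> t - b * p i'" using ab by (simp add: diff_le_mono2)
    have "p i dvd (t - b * p i') - (t - a * p i')"
      using mod_eq_dvd_iff_nat[OF le, of "p i"] ee by metis
    also have "(t - b * p i') - (t - a * p i') = (a - b) * p i'"
      using ta tb ab by (simp add: diff_mult_distrib)
    finally have "p i dvd (a - b)" using pr_dvd_other[OF i i' ne] by blast
    hence "a - b = 0" using pr_ndvd_small[OF i, of "a - b"] a1 b1 by linarith
    thus "a = b" using ab by simp
  qed
  show ?thesis
    using key[of l2 l1] key[of l1 l2] l1 l2 t1 t2 e by (cases "l2 \<le> l1") auto
qed

text \<open>Off the residue class of k modulo p_i, a 1 of x^{alpha_i} is seen by at most one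
  tap of each other prime, hence by at most r - 1 taps.\<close>
lemma taps_off_class:
  assumes i: "i < r" and tk: "k \<le> t" and off: "t mod p i \<noteq> k mod p i"
  shows "card {j \<in> {1..k}. (t - j) mod p i = k mod p i \<and> tap j} \<le> r - 1"
proof -
  let ?Q = "{j \<in> {1..k}. (t - j) mod p i = k mod p i \<and> tap j}"
  define Qi where "Qi i' = {j \<in> ?Q. \<exists>l. 1 \<le> l \<and> l \<le> 2 * r \<and> j = l * p i'}" for i'
  have sub: "?Q \<subseteq> (\<Union>i'\<in>{..<r} - {i}. Qi i')"
  proof
    fix j assume j: "j \<in> ?Q"
    then obtain i' l where il: "i' < r" "1 \<le> l" "l \<le> 2*r" "j = l * p i'"
      unfolding tap_def by blast
    have "i' \<noteq> i"
    proof
      assume "i' = i"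
      hence "(t - j) mod p i = t mod p i" using j tk il(4)
        by (metis atLeastAtMost_iff le_add_diff_inverse2 le_trans mem_Collect_eq mod_mult_self1)
      thus False using j off by simp
    qed
    thus "j \<in> (\<Union>i'\<in>{..<r} - {i}. Qi i')" using il j unfolding Qi_def by blast
  qed
  have Qi_le_1: "card (Qi i') \<le> 1" if i': "i' \<in> {..<r} - {i}" for i'
  proof -
    have "finite (Qi i')" unfolding Qi_def by auto
    moreover have "\<forall>a\<in>Qi i'. \<forall>b\<in>Qi i'. a = b"
    proof (intro ballI)
      fix a b assume a: "a \<in> Qi i'" and b: "b \<in> Qi i'"
      obtain la where la: "1 \<le> la" "la \<le> 2*r" "a = la * p i'" using a unfolding Qi_def by blast
      obtain lb where lb: "1 \<le> lb" "lb \<le> 2*r" "b = lb * p i'" using b unfolding Qi_def by blast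
      have "a \<le> t" "b \<le> t" using a b tk unfolding Qi_def by auto
      moreover have "(t - a) mod p i = (t - b) mod p i" using a b unfolding Qi_def by auto
      ultimately have "la = lb" using taps_distinct_mod[OF i, of i' la lb t] i' la lb by auto
      thus "a = b" using la lb by simp
    qed
    ultimately show ?thesis using card_le_Suc0_iff_eq by auto
  qed
  have "card ?Q \<le> card (\<Union>i'\<in>{..<r} - {i}. Qi i')"
    by (rule card_mono[OF _ sub]) (auto simp: Qi_def)
  also have "\<dots> \<le> (\<Sum>i'\<in>{..<r} - {i}. card (Qi i'))" by (rule card_UN_le) simp
  also have "\<dots> \<le> (\<Sum>i'\<in>{..<r} - {i}. 1)" by (rule sum_mono) (use Qi_le_1 in auto)
  also have "\<dots> = r - 1" using i by simp
  finally show ?thesis .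
qed

section \<open>Closed forms of the sequences\<close>

lemma xs_initial:
  assumes i: "i < r" and t: "t < k"
  shows "xs m i t = (if t mod p i = k mod p i then 1 else 0)"
proof -
  define P where "P = p i"
  have beta: "beta m i = k mod P" unfolding beta_def mu_def P_def by (simp add: minus_mult_div_eq_mod)
  have mu: "mu m i = k div P" unfolding mu_def P_def by simp
  have "(\<exists>l. l < mu m i \<and> t = beta m i + l * P) \<longleftrightarrow> t mod P = k mod P"
  proof
    assume "\<exists>l. l < mu m i \<and> t = beta m i + l * P"
    then obtain l where "t = k mod P + l * P" using beta by auto
    thus "t mod P = k mod P" by simp
  next
    assume h: "t mod P = k mod P"
    have t_eq: "t = k mod P + (t div P) * P" using h mod_div_mult_eq[of t P] by linarith
    have k_eq: "k = k mod P + (k div P) * P" using mod_div_mult_eq[of k P] by linarith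
    have "(t div P) * P < (k div P) * P" using t t_eq k_eq by linarith
    hence "t div P < k div P" by (meson mult_less_cancel2)
    thus "\<exists>l. l < mu m i \<and> t = beta m i + l * P" using t_eq beta mu by auto
  qed
  thus ?thesis using t by (subst xs.simps) (simp add: P_def)
qed

text \<open>On the class of k modulo p_i exactly the taps of p_i see a 1, and their weights
  sum to the threshold.\<close>
lemma class_weight_on:
  assumes i: "i < r" and tk: "k \<le> t" and on: "t mod p i = k mod p i"
  shows "(\<Sum>j = 1..k. if (t - j) mod p i = k mod p i then abar m j else 0) = 2 * int r"
proof -
  have "(t - j) mod p i = k mod p i \<longleftrightarrow> p i dvd j" if "j \<le> t" for j
  proof -
    have "(t - j) mod p i = t mod p i \<longleftrightarrow> p i dvd t - (t - j)"
      by (metis diff_le_self mod_eq_dvd_iff_nat)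
    thus ?thesis using on that by simp
  qed
  hence "(\<Sum>j = 1..k. if (t - j) mod p i = k mod p i then abar m j else 0)
      = (\<Sum>j = 1..k. if p i dvd j then abar m j else 0)"
    using tk by (intro sum.cong) auto
  thus ?thesis using abar_sum_multiples[OF i] by simp
qed

lemma class_weight_off:
  assumes i: "i < r" and tk: "k \<le> t" and off: "t mod p i \<noteq> k mod p i"
  shows "(\<Sum>j = 1..k. if (t - j) mod p i = k mod p i then abar m j else 0) \<le> 2 * int (r - 1)"
proof -
  let ?Q = "{j \<in> {1..k}. (t - j) mod p i = k mod p i \<and> tap j}"
  have "(\<Sum>j = 1..k. if (t - j) mod p i = k mod p i then abar m j else 0)
      \<le> (\<Sum>j = 1..k. if j \<in> ?Q then 2 else 0)"
    by (rule sum_mono) (use abar_le_2 abar_non_tap in auto)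
  also have "\<dots> = (\<Sum>j \<in> ?Q. 2)"
  proof -
    have "{1..k} \<inter> ?Q = ?Q" by auto
    thus ?thesis using sum.inter_restrict[of "{1..k}" "\<lambda>_. (2::int)" ?Q] by simp
  qed
  also have "\<dots> = 2 * int (card ?Q)" by simp
  finally show ?thesis using taps_off_class[OF assms] by linarith
qed

lemma xs_closed_form: "i < r \<Longrightarrow> xs m i t = (if t mod p i = k mod p i then 1 else 0)"
proof (induction t rule: less_induct)
  case (less t)
  note i = less.prems
  show ?case
  proof (cases "t < k")
    case True thus ?thesis using xs_initial[OF i] by simp
  next
    case False
    hence tk: "k \<le> t" by simp
    have weighted: "(\<Sum>j = 1..k. abar m j * xs m i (t - j))
        = (\<Sum>j = 1..k. if (t - j) mod p i = k mod p i then abar m j else 0)"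
    proof (rule sum.cong)
      fix j assume "j \<in> {1..k}"
      hence "t - j < t" using tk by auto
      thus "abar m j * xs m i (t - j) = (if (t - j) mod p i = k mod p i then abar m j else 0)"
        using less.IH[OF _ i] by simp
    qed simp
    have step: "xs m i t = ind ((\<Sum>j = 1..k. abar m j * xs m i (t - j)) - thetabar m)"
      using False by (subst xs.simps) simp
    show ?thesis
    proof (cases "t mod p i = k mod p i")
      case True
      thus ?thesis using weighted step class_weight_on[OF i tk] by (simp add: ind_def thetabar_def)
    next
      case False
      thus ?thesis using weighted step class_weight_off[OF i tk] rho_pos
        by (simp add: ind_def thetabar_def)
    qed
  qed
qed

lemma bb_sum_sparse:
  fixes g :: "nat \<Rightarrow> int"
  shows "(\<Sum>f = 1..hh m. bb m f * g f) = (\<Sum>j = 1..k. abar m j * g (r * j))"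
proof -
  let ?R = "(\<lambda>j. r * j) ` {1..k}"
  have sub: "?R \<subseteq> {1..hh m}" using rho_pos hh_eq by auto
  have zero: "\<forall>f\<in>{1..hh m} - ?R. bb m f * g f = 0"
  proof
    fix f assume f: "f \<in> {1..hh m} - ?R"
    show "bb m f * g f = 0"
    proof (cases "r dvd f \<and> 1 \<le> f div r \<and> f div r \<le> k")
      case True
      hence "f = r * (f div r)" by simp
      hence "f \<in> ?R" using True by (metis atLeastAtMost_iff image_eqI)
      thus ?thesis using f by blast
    next
      case False
      hence "bb m f = 0" unfolding bb_def by (rule if_not_P)
      thus ?thesis by simp
    qed
  qed
  have "(\<Sum>f = 1..hh m. bb m f * g f) = (\<Sum>f \<in> ?R. bb m f * g f)"
    using sum.mono_neutral_left[OF _ sub zero] by simp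
  also have "\<dots> = (\<Sum>j = 1..k. bb m (r * j) * g (r * j))"
    using rho_pos by (subst sum.reindex) (auto simp: inj_on_def)
  also have "\<dots> = (\<Sum>j = 1..k. abar m j * g (r * j))"
    using rho_pos by (intro sum.cong) (auto simp: bb_def)
  finally show ?thesis .
qed

lemma ys_interleaves_xs: "ys m n = xs m (n mod r) (1 + n div r)"
proof (induction n rule: less_induct)
  case (less n)
  show ?case
  proof (cases "n < hh m")
    case True thus ?thesis by (subst ys.simps) simp
  next
    case False
    hence nh: "r * k \<le> n" using hh_eq by simp
    hence kn: "k \<le> n div r" using rho_pos
      by (metis div_le_mono nonzero_mult_div_cancel_left not_gr0)
    define i where "i = n mod r"
    define t where "t = 1 + n div r"
    have i: "i < r" unfolding i_def using rho_pos by simp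
    have "(\<Sum>f = 1..hh m. bb m f * ys m (n - f)) = (\<Sum>j = 1..k. abar m j * ys m (n - r * j))"
      by (rule bb_sum_sparse[of "\<lambda>f. ys m (n - f)"])
    also have "\<dots> = (\<Sum>j = 1..k. abar m j * xs m i (t - j))"
    proof (rule sum.cong)
      fix j assume j: "j \<in> {1..k}"
      have jn: "j \<le> n div r" using j kn by simp
      have e: "n - r * j = r * (n div r - j) + i"
        using jn unfolding i_def
        by (metis add.commute add_diff_assoc2 diff_mult_distrib2 div_mult_mod_eq mult.commute
            mult_le_mono2)
      have m1: "(n - r * j) mod r = i" using e i by simp
      have d1: "(n - r * j) div r = n div r - j" using e i rho_pos by simp
      have "0 < r * j" "r * j \<le> r * k" using rho_pos j by auto
      hence "n - r * j < n" using nh by linarith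
      hence "ys m (n - r * j) = xs m i (t - j)"
        using less.IH m1 d1 jn unfolding t_def by (simp add: Suc_diff_le)
      thus "abar m j * ys m (n - r * j) = abar m j * xs m i (t - j)" by simp
    qed simp
    finally have "(\<Sum>f = 1..hh m. bb m f * ys m (n - f)) = (\<Sum>j = 1..k. abar m j * xs m i (t - j))" .
    moreover have "xs m i t = ind ((\<Sum>j = 1..k. abar m j * xs m i (t - j)) - thetabar m)"
      using kn unfolding t_def by (subst xs.simps) simp
    ultimately show ?thesis using False unfolding t_def i_def by (subst ys.simps) simp
  qed
qed

lemma ys_closed_form:
  "ys m n = (if (1 + n div r) mod p (n mod r) = k mod p (n mod r) then 1 else 0)"
  using xs_closed_form[of "n mod r" "1 + n div r"] rho_pos ys_interleaves_xs by simp

lemma ys_01: "ys m n = 0 \<or> ys m n = 1" using ys_closed_form by simp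

lemma ys_eq_1_iff: "ys m t = 1 \<longleftrightarrow> int (r * p (t mod r)) dvd int t - int (r * (k - 1) + t mod r)"
proof -
  define P where "P = p (t mod r)"
  have "ys m t = 1 \<longleftrightarrow> (1 + t div r) mod P = k mod P" using ys_closed_form unfolding P_def by simp
  also have "\<dots> \<longleftrightarrow> int (1 + t div r) mod int P = int k mod int P"
    by (metis of_nat_eq_iff zmod_int)
  also have "\<dots> \<longleftrightarrow> int P dvd int (1 + t div r) - int k" by (simp add: mod_eq_dvd_iff)
  also have "\<dots> \<longleftrightarrow> int r * int P dvd int r * (int (1 + t div r) - int k)"
    using rho_pos by simp
  also have "int r * (int (1 + t div r) - int k) = int t - int (r * (k - 1) + t mod r)"
  proof -
    have "int t = int r * int (t div r) + int (t mod r)"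
      by (metis of_nat_add of_nat_mult div_mult_mod_eq mult.commute)
    moreover have "int (r * (k - 1)) = int r * int k - int r"
      using kk_pos by (cases k) (simp_all add: algebra_simps)
    ultimately show ?thesis by (simp only: of_nat_add) (simp add: algebra_simps)
  qed
  finally show ?thesis unfolding P_def by simp
qed

section \<open>Counting the firing lags\<close>

text \<open>The lags f for which y fires at time n - f, sorted by the residue class of
  n - f modulo r (which selects the governing prime p_i).\<close>
definition fires :: "nat \<Rightarrow> nat \<Rightarrow> nat set" where
  "fires n i = {f. f \<le> n \<and> ys m (n - f) = 1 \<and> (n - f) mod r = i}"

lemma fires_iff:
  assumes i: "i < r"
  shows "f \<in> fires n i \<longleftrightarrow> f \<le> n \<and> int (r * p i) dvd int n - int f - int (r * (k - 1) + i)"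
proof
  assume "f \<in> fires n i"
  thus "f \<le> n \<and> int (r * p i) dvd int n - int f - int (r * (k - 1) + i)"
    using ys_eq_1_iff[of "n - f"] unfolding fires_def by (auto simp: of_nat_diff)
next
  assume a: "f \<le> n \<and> int (r * p i) dvd int n - int f - int (r * (k - 1) + i)"
  have "int r dvd int (r * p i)" by simp
  hence "int r dvd int n - int f - int (r * (k - 1) + i)" using a by (rule dvd_trans[OF _ conjunct2])
  hence shifted: "int r dvd (int n - int f - int (r * (k - 1) + i)) + int r * int (k - 1)"
    by (rule dvd_add) simp
  have "int (n - f) = int n - int f" using a by (simp add: of_nat_diff)
  hence eq: "(int n - int f - int (r * (k - 1) + i)) + int r * int (k - 1) = int (n - f) - int i"
    by (simp only: of_nat_add of_nat_mult)
  from shifted have "int r dvd int (n - f) - int i" by (simp only: eq)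
  hence "[int (n - f) = int i] (mod int r)" by (simp add: cong_iff_dvd_diff)
  hence "[n - f = i] (mod r)" by (rule cong_int_iff[THEN iffD1])
  hence "(n - f) mod r = i" using i by (simp add: cong_def)
  thus "f \<in> fires n i" using a ys_eq_1_iff[of "n - f"] unfolding fires_def by (simp add: of_nat_diff)
qed

lemma fires_congruent:
  assumes i: "i < r" and a: "a \<in> fires n i" and b: "b \<in> fires n i"
  shows "int (r * p i) dvd int a - int b"
proof -
  have "int (r * p i) dvd int n - int b - int (r * (k - 1) + i)"
    and "int (r * p i) dvd int n - int a - int (r * (k - 1) + i)"
    using a b fires_iff[OF i] by auto
  hence "int (r * p i) dvd (int n - int b - int (r * (k - 1) + i)) - (int n - int a - int (r * (k - 1) + i))"
    by (rule dvd_diff)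
  thus ?thesis by simp
qed

lemma fires_mod_rho:
  assumes "f \<in> fires n i" shows "int r dvd int n - int f - int i"
proof -
  have f: "f \<le> n" and c: "(n - f) mod r = i" using assms unfolding fires_def by auto
  have "[n - f = i] (mod r)" unfolding cong_def c[symmetric] by simp
  hence "[int (n - f) = int i] (mod int r)" by (rule cong_int_iff[THEN iffD2])
  hence "int r dvd int (n - f) - int i" by (simp add: cong_iff_dvd_diff)
  thus ?thesis using f by (simp add: of_nat_diff)
qed

lemma card_by_class:
  assumes fin: "finite S" and S: "S \<subseteq> {f. f \<le> n \<and> ys m (n - f) = 1}"
  shows "card S = (\<Sum>i<r. card (S \<inter> fires n i))"
proof -
  have "S = (\<Union>i<r. S \<inter> fires n i)" using S rho_pos unfolding fires_def by auto
  hence "card S = card (\<Union>i<r. S \<inter> fires n i)" by simp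
  also have "\<dots> = (\<Sum>i<r. card (S \<inter> fires n i))"
    by (rule card_UN_disjoint) (use fin in \<open>auto simp: fires_def\<close>)
  finally show ?thesis .
qed

lemma class_hits_le:
  assumes i: "i < r" and A: "A \<subseteq> {1..hh m}"
  shows "card (A \<inter> fires n i) \<le> (k - 1) div p i + 1"
proof -
  have "card (A \<inter> fires n i) \<le> (hh m - 1) div (r * p i) + 1"
    using A rho_pos pr_pos[OF i] fires_congruent[OF i]
    by (intro card_pairwise_cong_le) auto
  also have "(hh m - 1) div (r * p i) = (k - 1) div p i"
    unfolding hh_eq using div_cancel_left_pred rho_pos kk_pos by simp
  finally show ?thesis .
qed

definition anchor :: "nat \<Rightarrow> nat" where
  "anchor d = hh m + L1 m d - r"

lemma L1_ge_rho: assumes d: "d < r" shows "r \<le> L1 m d"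
proof -
  have "0 \<notin> p ` {..d}" using pr_pos d by (auto simp: image_iff)
  hence "Lcm (p ` {..d}) \<noteq> 0" by (simp add: Lcm_0_iff)
  hence "1 \<le> Lcm (p ` {..d})" by linarith
  hence "r * 1 \<le> r * Lcm (p ` {..d})" by (rule mult_le_mono2)
  thus ?thesis unfolding L1_def by simp
qed

lemma anchor_ge: "d < r \<Longrightarrow> hh m \<le> anchor d"
  using L1_ge_rho unfolding anchor_def by fastforce

lemma B0_eq: "B0 m d = {f. 1 \<le> f \<and> f \<le> hh m - d \<and> ys m (anchor d - f) = 1}"
  unfolding B0_def anchor_def by simp

lemma B0_subset: "B0 m d \<subseteq> {1..hh m}"
  unfolding B0_eq by auto

lemma B0_fires: "d < r \<Longrightarrow> B0 m d \<subseteq> {f. f \<le> anchor d \<and> ys m (anchor d - f) = 1}"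
  using anchor_ge unfolding B0_eq by fastforce

lemma AA_subset: "AA m d \<subseteq> {1..hh m}"
  unfolding AA_def Bl_def B0_eq by auto

lemma B0_finite: "finite (B0 m d)"
  using B0_subset by (rule finite_subset) simp

lemma AA_finite: "finite (AA m d)"
  using AA_subset by (rule finite_subset) simp

text \<open>B_0(d) contains a whole residue class modulo r p_i of the window {1..h-d},
  hence at least (k-1) div p_i lags of each class.\<close>
lemma B0_class_ge:
  assumes d: "d < r" and i: "i < r"
  shows "(k - 1) div p i \<le> card (B0 m d \<inter> fires (anchor d) i)"
proof -
  define e where "e = int (anchor d) - int (r * (k - 1) + i)"
  have sub: "{x \<in> {1..<1 + (hh m - d)}. int (r * p i) dvd int x - e} \<subseteq> B0 m d \<inter> fires (anchor d) i"
  proof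
    fix x assume x: "x \<in> {x \<in> {1..<1 + (hh m - d)}. int (r * p i) dvd int x - e}"
    have xN: "x \<le> anchor d" using x anchor_ge[OF d] by auto
    have "int (r * p i) dvd - (int x - e)" using x by (simp only: dvd_minus_iff) simp
    hence "x \<in> fires (anchor d) i" using xN fires_iff[OF i] unfolding e_def by (simp add: algebra_simps)
    thus "x \<in> B0 m d \<inter> fires (anchor d) i" using x unfolding B0_eq fires_def by auto
  qed
  have "(hh m - d) div (r * p i) \<le> card {x \<in> {1..<1 + (hh m - d)}. int (r * p i) dvd int x - e}"
    using rho_pos pr_pos[OF i] by (intro card_class_ge) simp
  also have "\<dots> \<le> card (B0 m d \<inter> fires (anchor d) i)"
    by (rule card_mono[OF _ sub]) (simp add: B0_finite)
  finally have a: "(hh m - d) div (r * p i) \<le> card (B0 m d \<inter> fires (anchor d) i)" .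
  have "r * (k - 1) \<le> hh m - d" unfolding hh_eq using d kk_pos by (cases k) auto
  hence "(r * (k - 1)) div (r * p i) \<le> (hh m - d) div (r * p i)" by (rule div_le_mono)
  moreover have "(r * (k - 1)) div (r * p i) = (k - 1) div p i" using rho_pos by simp
  ultimately show ?thesis using a by linarith
qed

lemma B0_class_ge_2rho:
  assumes d: "d < r" and i: "i < r"
  shows "2 * r \<le> card (B0 m d \<inter> fires (anchor d) i)"
proof -
  have "2 * r \<le> (k - 1) div p i"
    using taps_below_kk[OF i] pr_pos[OF i] by (simp add: less_eq_div_iff_mult_less_eq)
  thus ?thesis using B0_class_ge[OF assms] by linarith
qed

definition aligned :: "nat \<Rightarrow> nat \<Rightarrow> nat \<Rightarrow> bool" where
  "aligned n d i = (\<exists>l\<le>d. int (r * p i) dvd int n - int (anchor d) - int l)"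

lemma shift_source_class:
  assumes g: "g1 \<le> N" "g2 \<le> N" and a: "l + g1 \<in> fires n i" and b: "l + g2 \<in> fires n i"
  shows "(N - g1) mod r = (N - g2) mod r"
proof -
  have "int r dvd (int n - int (l + g1) - int i) - (int n - int (l + g2) - int i)"
    using fires_mod_rho[OF a] fires_mod_rho[OF b] by (rule dvd_diff)
  hence "int r dvd int (N - g1) - int (N - g2)" using g by (simp add: of_nat_diff)
  hence "[int (N - g1) = int (N - g2)] (mod int r)" by (simp add: cong_iff_dvd_diff)
  hence "[N - g1 = N - g2] (mod r)" by (rule cong_int_iff[THEN iffD1])
  thus ?thesis by (simp add: cong_def)
qed

lemma aligned_if_same_class:
  assumes i: "i < r" and l: "l \<le> d"
    and g: "g \<in> fires (anchor d) i" and lg: "l + g \<in> fires n i"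
  shows "aligned n d i"
proof -
  have "int (r * p i) dvd int (anchor d) - int g - int (r * (k - 1) + i)"
    using g unfolding fires_iff[OF i] by (rule conjunct2)
  moreover have "int (r * p i) dvd int n - int (l + g) - int (r * (k - 1) + i)"
    using lg unfolding fires_iff[OF i] by (rule conjunct2)
  ultimately have "int (r * p i) dvd (int n - int (l + g) - int (r * (k - 1) + i))
      - (int (anchor d) - int g - int (r * (k - 1) + i))"
    by (rule dvd_diff[rotated])
  hence "int (r * p i) dvd int n - int (anchor d) - int l" by (simp add: algebra_simps)
  thus ?thesis using l unfolding aligned_def by blast
qed

text \<open>In a misaligned class, each shift l + B_0(d) contributes at most one hit: two
  hits differ by a common multiple of r p_i and of r p_i1, where i1 is the class
  (different from i) in which their B_0 preimages fire, and they lie in {1..h}.\<close>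
lemma shift_hits_le_1:
  assumes d: "d < r" and i: "i < r" and l: "l \<le> d" and mis: "\<not> aligned n d i"
  shows "card ((\<lambda>f. l + f) ` B0 m d \<inter> fires n i) \<le> 1"
proof -
  let ?N = "anchor d" and ?S = "(\<lambda>f. l + f) ` B0 m d \<inter> fires n i"
  have "finite ?S" using B0_finite by simp
  moreover have "\<forall>a\<in>?S. \<forall>b\<in>?S. a = b"
  proof (intro ballI)
    fix a b assume a: "a \<in> ?S" and b: "b \<in> ?S"
    obtain g1 where g1: "g1 \<in> B0 m d" "a = l + g1" using a by auto
    obtain g2 where g2: "g2 \<in> B0 m d" "b = l + g2" using b by auto
    define i1 where "i1 = (?N - g1) mod r"
    have i1: "i1 < r" unfolding i1_def using rho_pos by simp
    have Fa: "a \<in> fires n i" and Fb: "b \<in> fires n i" using a b by auto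
    have gN: "g1 \<le> ?N" "g2 \<le> ?N" using B0_fires[OF d] g1(1) g2(1) by auto
    have "(?N - g2) mod r = i1"
      using shift_source_class[OF gN, of l n i] Fa Fb g1(2) g2(2) unfolding i1_def by simp
    hence F1: "g1 \<in> fires ?N i1" and F2: "g2 \<in> fires ?N i1"
      using B0_fires[OF d] g1 g2 unfolding i1_def fires_def by auto
    have "i1 \<noteq> i" using aligned_if_same_class[OF i l, of g1 n] F1 Fa g1 mis by auto
    have "int (r * p i) dvd int a - int b" using fires_congruent[OF i Fa Fb] .
    moreover have "int (r * p i1) dvd int a - int b"
      using fires_congruent[OF i1 F1 F2] g1 g2 by simp
    moreover have "a \<in> {1..hh m}" "b \<in> {1..hh m}"
      using g1 g2 l B0_eq by auto
    hence "\<bar>int a - int b\<bar> < int (hh m)" by auto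
    hence "\<bar>int a - int b\<bar> < int (r * k)" using hh_eq by simp
    ultimately have "int a - int b = 0"
      by (rule common_multiple_small[OF i i1 \<open>i1 \<noteq> i\<close>[symmetric]])
    thus "a = b" by simp
  qed
  ultimately show ?thesis using card_le_Suc0_iff_eq by auto
qed

lemma misaligned_class_hits_le:
  assumes d: "d < r" and i: "i < r" and mis: "\<not> aligned n d i"
  shows "card (AA m d \<inter> fires n i) \<le> d + 1"
proof -
  have eq: "AA m d \<inter> fires n i = (\<Union>l\<in>{0..d}. (\<lambda>f. l + f) ` B0 m d \<inter> fires n i)"
    unfolding AA_def Bl_def by auto
  have "card (AA m d \<inter> fires n i) \<le> (\<Sum>l\<in>{0..d}. card ((\<lambda>f. l + f) ` B0 m d \<inter> fires n i))"
    unfolding eq by (rule card_UN_le) simp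
  also have "\<dots> \<le> (\<Sum>l\<in>{0..d}. 1)" by (rule sum_mono) (use shift_hits_le_1[OF d i _ mis] in auto)
  finally show ?thesis by simp
qed

text \<open>If every class were aligned, all with the same shift l0 (shifts are distinct
  modulo r), then n = anchor + l0 modulo r lcm(p_0,...,p_(r-1)) = L_2.\<close>
lemma exists_misaligned_class:
  assumes d: "d < r"
    and nc: "\<forall>j\<in>{0..d}. \<not> [n = hh m - r + L1 m d + j] (mod L2 m)"
  shows "\<exists>i<r. \<not> aligned n d i"
proof (rule ccontr)
  assume "\<not> (\<exists>i<r. \<not> aligned n d i)"
  hence all: "\<forall>i<r. aligned n d i" by blast
  obtain l0 where l0: "l0 \<le> d" "int (r * p 0) dvd int n - int (anchor d) - int l0"
    using all rho_pos unfolding aligned_def by blast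
  have common: "int (r * p i) dvd int n - int (anchor d) - int l0" if i: "i < r" for i
  proof -
    obtain l where l: "l \<le> d" "int (r * p i) dvd int n - int (anchor d) - int l"
      using all i unfolding aligned_def by blast
    have "int r dvd int n - int (anchor d) - int l0" by (rule dvd_trans[OF _ l0(2)]) simp
    moreover have "int r dvd int n - int (anchor d) - int l" by (rule dvd_trans[OF _ l(2)]) simp
    ultimately have "int r dvd (int n - int (anchor d) - int l0) - (int n - int (anchor d) - int l)"
      by (rule dvd_diff)
    hence "l = l0" using small_dvd_eq[of r l l0] l(1) l0(1) d by simp
    thus ?thesis using l by simp
  qed
  define X where "X = int n - int (anchor d) - int l0"
  have "int r dvd X" using common[OF rho_pos] unfolding X_def by (rule dvd_trans[rotated]) simp
  then obtain Y where Y: "X = int r * Y" by (auto elim: dvdE)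
  have "int (p i) dvd Y" if i: "i < r" for i
    using common[OF i] Y rho_pos unfolding X_def by simp
  hence "Lcm (p ` {..<r}) dvd nat \<bar>Y\<bar>" by (intro Lcm_least) auto
  hence "int (L2 m) dvd X" unfolding L2_def Y by simp
  hence "[int n = int (anchor d + l0)] (mod int (L2 m))"
    unfolding X_def by (simp add: cong_iff_dvd_diff algebra_simps)
  hence "[n = anchor d + l0] (mod L2 m)" by (rule cong_int_iff[THEN iffD1])
  moreover have "anchor d + l0 = hh m - r + L1 m d + l0"
  proof -
    have "r \<le> hh m" unfolding hh_eq using kk_pos by simp
    thus ?thesis unfolding anchor_def by arith
  qed
  ultimately show False using nc l0(1) by auto
qed

lemma AA_hits_by_class:
  assumes n: "hh m \<le> n"
  shows "(\<Sum>f\<in>AA m d. ys m (n - f)) = int (\<Sum>i<r. card (AA m d \<inter> fires n i))"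
proof -
  let ?H = "{f\<in>AA m d. ys m (n - f) = 1}"
  have classes: "?H \<inter> fires n i = AA m d \<inter> fires n i" for i by (auto simp: fires_def)
  have "(\<Sum>f\<in>AA m d. ys m (n - f)) = (\<Sum>f\<in>AA m d. if f \<in> ?H then 1 else 0)"
    by (rule sum.cong) (use ys_01 in auto)
  also have "\<dots> = (\<Sum>f\<in>?H. 1)"
    using sum.inter_restrict[OF AA_finite[of d], of "\<lambda>_. (1::int)" ?H] by (simp add: Int_absorb1)
  also have "\<dots> = int (card ?H)" by simp
  also have "card ?H = (\<Sum>i<r. card (?H \<inter> fires n i))"
  proof (rule card_by_class)
    show "?H \<subseteq> {f. f \<le> n \<and> ys m (n - f) = 1}" using AA_subset[of d] n by fastforce
  qed (use AA_finite in simp)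
  finally show ?thesis using classes by simp
qed

text \<open>The main estimate: sort both A(d)-hits at time n and B_0(d) by class; every class
  has at most one more hit than B_0(d) has elements, and a misaligned class has
  at least r fewer.\<close>
lemma hits_below_Tot:
  assumes d: "d < r" and n: "hh m \<le> n"
    and nc: "\<forall>j\<in>{0..d}. \<not> [n = hh m - r + L1 m d + j] (mod L2 m)"
  shows "(\<Sum>f\<in>AA m d. ys m (n - f)) < int (Tot m d)"
proof -
  let ?a = "\<lambda>i. card (AA m d \<inter> fires n i)" and ?b = "\<lambda>i. card (B0 m d \<inter> fires (anchor d) i)"
  have sumA: "(\<Sum>f\<in>AA m d. ys m (n - f)) = int (\<Sum>i<r. ?a i)" by (rule AA_hits_by_class[OF n])
  have sumB: "Tot m d = (\<Sum>i<r. ?b i)"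
    unfolding Tot_def using B0_finite B0_fires[OF d] by (rule card_by_class)
  obtain i0 where i0: "i0 < r" "\<not> aligned n d i0" using exists_misaligned_class[OF d nc] by blast
  have "(\<Sum>i<r. ?a i) < (\<Sum>i<r. ?b i)"
  proof (rule sum_less_by_slack)
    show "?a i \<le> ?b i + 1" if "i \<in> {..<r}" for i
      using class_hits_le[OF _ AA_subset] B0_class_ge[OF d] that by (meson le_trans add_le_mono1 lessThan_iff)
    show "?a i0 + card {..<r} \<le> ?b i0"
      using misaligned_class_hits_le[OF d i0] B0_class_ge_2rho[OF d i0(1)] d by simp
  qed (use i0 in auto)
  hence "int (\<Sum>i<r. ?a i) < int (Tot m d)" unfolding sumB by (simp only: of_nat_less_iff)
  thus ?thesis unfolding sumA .
qed

end

theorem lemma16: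
  fixes m d n :: nat
  assumes "m > 0"
    and "rho m \<ge> 2"
    and "d \<le> rho m - 1"
    and "n \<ge> hh m"
    and "\<forall>j\<in>{0..d}. \<not> [n = hh m - rho m + L1 m d + j] (mod L2 m)"
  shows "(\<Sum>f\<in>AA m d. ys m (n - f)) < int (Tot m d)"
proof -
  interpret prime_window m using assms(1,2) by unfold_locales
  have "d < rho m" using assms(2,3) by linarith
  thus ?thesis using hits_below_Tot assms(4,5) by blast
qed

end
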